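(* A 2-edge-colored graph $G$ is PC acyclic of type 5 if and only if $G$ is bipartite and has no PC cycle.
   Context: A 2-edge-colored graph is a finite undirected graph in which every edge is colored with one of two colors. A walk $v_1e_1v_2\dots e_{p-1}v_p$ is properly colored (PC) if consecutive edges $e_i,e_{i+1}$ have different colors and, if closed ($v_1=v_p$), $e_{p-1}$ and $e_1$ also differ in color; a PC cycle is a PC closed walk whose vertices other than the first/last are distinct. An ordering $v_1,\dots,v_n$ of $V(G)$ is of type 5 if for every $i\in[n]$, all edges from $v_i$ to $\{v_{i+1},\dots,v_n\}$ have the same color, all edges from $v_i$ to $\{v_1,\dots,v_{i-1}\}$ have the same color, and these two colors are different. $G$ is PC acyclic of type 5 if it has an ordering of its vertices of type 5. *)

theory Defs
  imports Main
begin

definition two_edge_colored_graph :: "'a set \<Rightarrow> ('a \<Rightarrow> 'a \<Rightarrow> bool) \<Rightarrow> ('a \<Rightarrow> 'a \<Rightarrow> bool) \<Rightarrow> bool" where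
  "two_edge_colored_graph V E c \<longleftrightarrow>
     finite V \<and>
     (\<forall>u v. E u v \<longrightarrow> u \<in> V \<and> v \<in> V) \<and>
     (\<forall>u v. E u v \<longrightarrow> E v u) \<and>
     (\<forall>v. \<not> E v v) \<and>
     (\<forall>u v. E u v \<longrightarrow> c u v = c v u)"

definition pc_cycle :: "'a set \<Rightarrow> ('a \<Rightarrow> 'a \<Rightarrow> bool) \<Rightarrow> ('a \<Rightarrow> 'a \<Rightarrow> bool) \<Rightarrow> 'a list \<Rightarrow> bool" where
  "pc_cycle V E c xs \<longleftrightarrow>
     (let n = length xs in
       n \<ge> 2 \<and> distinct xs \<and> set xs \<subseteq> V \<and>
       (\<forall>i<n. E (xs ! i) (xs ! ((i + 1) mod n))) \<and>
       (\<forall>i<n. c (xs ! i) (xs ! ((i + 1) mod n)) \<noteq>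
               c (xs ! ((i + 1) mod n)) (xs ! ((i + 2) mod n))))"

definition has_pc_cycle :: "'a set \<Rightarrow> ('a \<Rightarrow> 'a \<Rightarrow> bool) \<Rightarrow> ('a \<Rightarrow> 'a \<Rightarrow> bool) \<Rightarrow> bool" where
  "has_pc_cycle V E c \<longleftrightarrow> (\<exists>xs. pc_cycle V E c xs)"

definition bipartite :: "'a set \<Rightarrow> ('a \<Rightarrow> 'a \<Rightarrow> bool) \<Rightarrow> bool" where
  "bipartite V E \<longleftrightarrow> (\<exists>A. A \<subseteq> V \<and> (\<forall>u v. E u v \<longrightarrow> (u \<in> A \<longleftrightarrow> v \<notin> A)))"

definition type5_ordering :: "'a set \<Rightarrow> ('a \<Rightarrow> 'a \<Rightarrow> bool) \<Rightarrow> ('a \<Rightarrow> 'a \<Rightarrow> bool) \<Rightarrow> 'a list \<Rightarrow> bool" where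
  "type5_ordering V E c vs \<longleftrightarrow>
     distinct vs \<and> set vs = V \<and>
     (\<forall>i<length vs. \<exists>a b. a \<noteq> b \<and>
        (\<forall>j<length vs. i < j \<longrightarrow> E (vs ! i) (vs ! j) \<longrightarrow> c (vs ! i) (vs ! j) = a) \<and>
        (\<forall>j<i. E (vs ! i) (vs ! j) \<longrightarrow> c (vs ! i) (vs ! j) = b))"

definition pc_acyclic_type5 :: "'a set \<Rightarrow> ('a \<Rightarrow> 'a \<Rightarrow> bool) \<Rightarrow> ('a \<Rightarrow> 'a \<Rightarrow> bool) \<Rightarrow> bool" where
  "pc_acyclic_type5 V E c \<longleftrightarrow> (\<exists>vs. type5_ordering V E c vs)"

end

theory Submission
  imports Defs
begin

text \<open>Let A be one side of a bipartition and orient each edge uv from u to v iff its colour is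
  the truth value of u \<in> A. Every edge gets exactly one orientation, and at each vertex all
  out-edges share one colour and all in-edges the other; hence every directed cycle is a PC cycle,
  and a type-5 ordering is the same as a topological ordering of this orientation. Without PC
  cycles the orientation is acyclic, so such an ordering exists. Conversely, in a type-5 ordering
  adjacent vertices differ in the colour of their forward edges, which gives a bipartition, and
  on a PC cycle the vertex that comes last in the ordering would see both of its cycle edges in
  its backward colour.\<close>

lemma two_edge_colored_graphD:
  assumes "two_edge_colored_graph V E c"
  shows "finite V" and "E u v \<Longrightarrow> u \<in> V \<and> v \<in> V" and "E u v \<Longrightarrow> E v u"
    and "\<not> E v v" and "E u v \<Longrightarrow> c u v = c v u"
  using assms unfolding two_edge_colored_graph_def by blast+

definition directed_cycle :: "('a \<Rightarrow> 'a \<Rightarrow> bool) \<Rightarrow> 'a list \<Rightarrow> bool" where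
  "directed_cycle R xs \<longleftrightarrow>
     xs \<noteq> [] \<and> distinct xs \<and> (\<forall>k<length xs. R (xs ! k) (xs ! (Suc k mod length xs)))"

lemma finite_range_obtains_first_repetition:
  fixes w :: "nat \<Rightarrow> 'a"
  assumes "finite (range w)"
  obtains i j where "i < j" "w i = w j" "inj_on w {i..<j}"
proof -
  have "\<not> inj w"
    using assms finite_imageD infinite_UNIV_nat by blast
  then have "\<exists>j. \<exists>i<j. w i = w j"
    unfolding inj_def by (metis linorder_neqE_nat)
  then obtain j where "\<exists>i<j. w i = w j" and first: "\<forall>j'<j. \<forall>i<j'. w i \<noteq> w j'"
    unfolding exists_least_iff[where P = "\<lambda>j. \<exists>i<j. w i = w j"] by blast
  then obtain i where "i < j" "w i = w j"
    by blast
  moreover have "inj_on w {i..<j}"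
    by (rule inj_onI) (metis first atLeastLessThan_iff linorder_neqE_nat)
  ultimately show thesis
    using that by blast
qed

lemma directed_cycle_of_walk:
  assumes walk: "\<And>k. R (w k) (w (Suc k))" and "i < j" "w i = w j" "inj_on w {i..<j}"
  shows "directed_cycle R (map w [i..<j])"
  unfolding directed_cycle_def
proof (intro conjI allI impI)
  show "map w [i..<j] \<noteq> []" "distinct (map w [i..<j])"
    using assms by (simp_all add: distinct_map)
  fix k assume k: "k < length (map w [i..<j])"
  have "map w [i..<j] ! (Suc k mod length (map w [i..<j])) = w (Suc (i + k))"
  proof (cases "Suc k < j - i")
    case True
    then show ?thesis by simp
  next
    case False
    then have "Suc k = j - i" "Suc (i + k) = j"
      using k by simp_all
    then show ?thesis
      using assms(3) by simp
  qed
  then show "R (map w [i..<j] ! k) (map w [i..<j] ! (Suc k mod length (map w [i..<j])))"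
    using k walk[of "i + k"] by simp
qed

lemma directed_cycle_if_successors:
  assumes "finite S" "S \<noteq> {}" "\<forall>s\<in>S. \<exists>t\<in>S. R s t"
  obtains xs where "directed_cycle R xs" "set xs \<subseteq> S"
proof -
  obtain g where g: "\<forall>s\<in>S. g s \<in> S \<and> R s (g s)"
    using assms(3) by metis
  obtain s where "s \<in> S"
    using assms(2) by blast
  define w where "w k = (g ^^ k) s" for k
  have wS: "w k \<in> S" for k
    by (induction k) (simp_all add: w_def g \<open>s \<in> S\<close>)
  have "R (w k) (w (Suc k))" for k
    using g wS[of k] by (simp add: w_def)
  moreover have "finite (range w)"
    using wS assms(1) by (meson finite_subset image_subsetI)
  then obtain i j where "i < j" "w i = w j" "inj_on w {i..<j}"
    by (rule finite_range_obtains_first_repetition)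
  ultimately have "directed_cycle R (map w [i..<j])"
    by (rule directed_cycle_of_walk)
  moreover have "set (map w [i..<j]) \<subseteq> S"
    using wS by auto
  ultimately show thesis
    using that by blast
qed

lemma topological_ordering_exists:
  assumes "finite S" and "\<nexists>xs. directed_cycle R xs \<and> set xs \<subseteq> S"
  obtains vs where "distinct vs" "set vs = S"
    "\<And>i j. i < length vs \<Longrightarrow> j < length vs \<Longrightarrow> R (vs ! i) (vs ! j) \<Longrightarrow> i < j"
proof -
  have "\<exists>vs. distinct vs \<and> set vs = S \<and>
          (\<forall>i<length vs. \<forall>j<length vs. R (vs ! i) (vs ! j) \<longrightarrow> i < j)"
    using assms
  proof (induction S rule: finite_psubset_induct)
    case (psubset S)
    show ?case
    proof (cases "S = {}")
      case True
      then show ?thesis by simp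
    next
      case False
      have "\<not> (\<forall>s\<in>S. \<exists>t\<in>S. R s t)"
        using directed_cycle_if_successors[OF psubset.hyps False] psubset.prems by metis
      then obtain s where s: "s \<in> S" and sink: "\<forall>t\<in>S. \<not> R s t"
        by blast
      have "S - {s} \<subset> S" "\<nexists>xs. directed_cycle R xs \<and> set xs \<subseteq> S - {s}"
        using s psubset.prems by blast+
      then obtain vs where vs: "distinct vs" "set vs = S - {s}"
        and topo: "\<forall>i<length vs. \<forall>j<length vs. R (vs ! i) (vs ! j) \<longrightarrow> i < j"
        using psubset.IH[of "S - {s}"] by blast
      have "i < j" if "i < length (vs @ [s])" "j < length (vs @ [s])"
        "R ((vs @ [s]) ! i) ((vs @ [s]) ! j)" for i j
      proof -
        have "i \<noteq> length vs"
          using that sink s vs(2) nth_mem[of j "vs @ [s]"] by auto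
        then show "i < j"
          using that topo by (auto simp: nth_append less_Suc_eq)
      qed
      then show ?thesis
        using vs s by (intro exI[of _ "vs @ [s]"]) auto
    qed
  qed
  then show thesis
    using that by blast
qed

definition bipartite_orientation ::
    "('a \<Rightarrow> 'a \<Rightarrow> bool) \<Rightarrow> ('a \<Rightarrow> 'a \<Rightarrow> bool) \<Rightarrow> 'a set \<Rightarrow> 'a \<Rightarrow> 'a \<Rightarrow> bool" where
  "bipartite_orientation E c A u v \<longleftrightarrow> E u v \<and> c u v = (u \<in> A)"

lemma bipartite_orientation_converse:
  assumes "two_edge_colored_graph V E c" and side: "\<forall>u v. E u v \<longrightarrow> (u \<in> A \<longleftrightarrow> v \<notin> A)"
    and "E u v"
  shows "bipartite_orientation E c A v u \<longleftrightarrow> \<not> bipartite_orientation E c A u v"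
  using two_edge_colored_graphD(3,5)[OF assms(1) \<open>E u v\<close>] side[rule_format, OF \<open>E u v\<close>] \<open>E u v\<close>
  unfolding bipartite_orientation_def by auto

lemma pc_cycle_if_directed_cycle:
  assumes G: "two_edge_colored_graph V E c" and side: "\<forall>u v. E u v \<longrightarrow> (u \<in> A \<longleftrightarrow> v \<notin> A)"
    and cyc: "directed_cycle (bipartite_orientation E c A) xs"
  shows "pc_cycle V E c xs"
proof -
  let ?n = "length xs"
  have step: "E (xs ! i) (xs ! (Suc i mod ?n)) \<and> c (xs ! i) (xs ! (Suc i mod ?n)) = (xs ! i \<in> A)"
    if "i < ?n" for i
    using cyc that unfolding directed_cycle_def bipartite_orientation_def by blast
  have "?n \<noteq> 1"
  proof
    assume "?n = 1"
    then show False
      using step[of 0] two_edge_colored_graphD(4)[OF G] by simp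
  qed
  moreover have "?n > 0"
    using cyc unfolding directed_cycle_def by simp
  ultimately have "?n \<ge> 2"
    by arith
  moreover have "set xs \<subseteq> V"
  proof
    fix x assume "x \<in> set xs"
    then obtain i where "i < ?n" "x = xs ! i"
      by (auto simp: in_set_conv_nth)
    then show "x \<in> V"
      using step two_edge_colored_graphD(2)[OF G] by blast
  qed
  moreover have "c (xs ! i) (xs ! (Suc i mod ?n)) \<noteq> c (xs ! (Suc i mod ?n)) (xs ! (Suc (Suc i) mod ?n))"
    if "i < ?n" for i
  proof -
    have "Suc i mod ?n < ?n"
      using that by (intro mod_less_divisor) linarith
    moreover have "Suc (Suc i mod ?n) mod ?n = Suc (Suc i) mod ?n"
      by (simp add: mod_Suc_eq)
    ultimately show ?thesis
      using step[of i] step[of "Suc i mod ?n"] side that by auto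
  qed
  ultimately show ?thesis
    using cyc step unfolding pc_cycle_def directed_cycle_def Let_def by simp
qed

lemma type5_ordering_if_topological:
  assumes G: "two_edge_colored_graph V E c" and side: "\<forall>u v. E u v \<longrightarrow> (u \<in> A \<longleftrightarrow> v \<notin> A)"
    and vs: "distinct vs" "set vs = V"
    and topo: "\<And>i j. i < length vs \<Longrightarrow> j < length vs \<Longrightarrow>
                 bipartite_orientation E c A (vs ! i) (vs ! j) \<Longrightarrow> i < j"
  shows "type5_ordering V E c vs"
  unfolding type5_ordering_def
proof (intro conjI allI impI vs)
  fix i assume i: "i < length vs"
  have "c (vs ! i) (vs ! j) = (vs ! i \<in> A)"
    if "j < length vs" "i < j" "E (vs ! i) (vs ! j)" for j
    using topo[OF that(1) i] bipartite_orientation_converse[OF G side that(3)] that(2)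
    unfolding bipartite_orientation_def by auto
  moreover have "c (vs ! i) (vs ! j) = (vs ! i \<notin> A)"
    if "j < i" "E (vs ! i) (vs ! j)" for j
    using topo[OF i, of j] that i unfolding bipartite_orientation_def by auto
  ultimately show "\<exists>a b. a \<noteq> b \<and>
      (\<forall>j<length vs. i < j \<longrightarrow> E (vs ! i) (vs ! j) \<longrightarrow> c (vs ! i) (vs ! j) = a) \<and>
      (\<forall>j<i. E (vs ! i) (vs ! j) \<longrightarrow> c (vs ! i) (vs ! j) = b)"
    by (intro exI[of _ "vs ! i \<in> A"] exI[of _ "vs ! i \<notin> A"]) auto
qed

lemma pc_acyclic_type5_if_bipartite_without_pc_cycle:
  assumes G: "two_edge_colored_graph V E c" and "bipartite V E" "\<not> has_pc_cycle V E c"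
  shows "pc_acyclic_type5 V E c"
proof -
  obtain A where side: "\<forall>u v. E u v \<longrightarrow> (u \<in> A \<longleftrightarrow> v \<notin> A)"
    using \<open>bipartite V E\<close> unfolding bipartite_def by blast
  have "\<nexists>xs. directed_cycle (bipartite_orientation E c A) xs \<and> set xs \<subseteq> V"
    using pc_cycle_if_directed_cycle[OF G side] \<open>\<not> has_pc_cycle V E c\<close>
    unfolding has_pc_cycle_def by blast
  then obtain vs where "distinct vs" "set vs = V"
    "\<And>i j. i < length vs \<Longrightarrow> j < length vs \<Longrightarrow>
       bipartite_orientation E c A (vs ! i) (vs ! j) \<Longrightarrow> i < j"
    using topological_ordering_exists two_edge_colored_graphD(1)[OF G] by metis
  then have "type5_ordering V E c vs"
    by (rule type5_ordering_if_topological[OF G side])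
  then show ?thesis
    unfolding pc_acyclic_type5_def by blast
qed

lemma type5_orderingE:
  assumes "type5_ordering V E c vs"
  obtains F where "distinct vs" "set vs = V"
    "\<And>i j. i < j \<Longrightarrow> j < length vs \<Longrightarrow> E (vs ! i) (vs ! j) \<Longrightarrow> c (vs ! i) (vs ! j) = F i"
    "\<And>i j. j < i \<Longrightarrow> i < length vs \<Longrightarrow> E (vs ! i) (vs ! j) \<Longrightarrow> c (vs ! i) (vs ! j) = (\<not> F i)"
proof -
  have "\<forall>i\<in>{..<length vs}. \<exists>a.
          (\<forall>j<length vs. i < j \<longrightarrow> E (vs ! i) (vs ! j) \<longrightarrow> c (vs ! i) (vs ! j) = a) \<and>
          (\<forall>j<i. E (vs ! i) (vs ! j) \<longrightarrow> c (vs ! i) (vs ! j) = (\<not> a))"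
  proof
    fix i assume "i \<in> {..<length vs}"
    then obtain a b where "a \<noteq> b"
      "\<forall>j<length vs. i < j \<longrightarrow> E (vs ! i) (vs ! j) \<longrightarrow> c (vs ! i) (vs ! j) = a"
      "\<forall>j<i. E (vs ! i) (vs ! j) \<longrightarrow> c (vs ! i) (vs ! j) = b"
      using assms[unfolded type5_ordering_def, THEN conjunct2, THEN conjunct2, rule_format, of i]
      by auto
    moreover have "b = (\<not> a)"
      using \<open>a \<noteq> b\<close> by blast
    ultimately show "\<exists>a.
          (\<forall>j<length vs. i < j \<longrightarrow> E (vs ! i) (vs ! j) \<longrightarrow> c (vs ! i) (vs ! j) = a) \<and>
          (\<forall>j<i. E (vs ! i) (vs ! j) \<longrightarrow> c (vs ! i) (vs ! j) = (\<not> a))"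
      by blast
  qed
  then obtain F where F: "\<forall>i\<in>{..<length vs}.
          (\<forall>j<length vs. i < j \<longrightarrow> E (vs ! i) (vs ! j) \<longrightarrow> c (vs ! i) (vs ! j) = F i) \<and>
          (\<forall>j<i. E (vs ! i) (vs ! j) \<longrightarrow> c (vs ! i) (vs ! j) = (\<not> F i))"
    by (rule bchoice[THEN exE])
  show thesis
  proof (rule that)
    show "distinct vs" "set vs = V"
      using assms unfolding type5_ordering_def by blast+
    show "c (vs ! i) (vs ! j) = F i" if "i < j" "j < length vs" "E (vs ! i) (vs ! j)" for i j
      using F[rule_format, of i] that by simp
    show "c (vs ! i) (vs ! j) = (\<not> F i)" if "j < i" "i < length vs" "E (vs ! i) (vs ! j)" for i j
      using F[rule_format, of i] that by simp
  qed
qed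

lemma bipartite_if_type5_ordering:
  assumes G: "two_edge_colored_graph V E c" and "type5_ordering V E c vs"
  shows "bipartite V E"
proof -
  obtain F where vs: "distinct vs" "set vs = V"
    and later: "\<And>i j. i < j \<Longrightarrow> j < length vs \<Longrightarrow> E (vs ! i) (vs ! j) \<Longrightarrow> c (vs ! i) (vs ! j) = F i"
    and earlier: "\<And>i j. j < i \<Longrightarrow> i < length vs \<Longrightarrow> E (vs ! i) (vs ! j) \<Longrightarrow> c (vs ! i) (vs ! j) = (\<not> F i)"
    using type5_orderingE[OF assms(2)] by blast
  have label_differs: "F i \<noteq> F j" if "i < j" "j < length vs" "E (vs ! i) (vs ! j)" for i j
    using later[OF that] earlier[OF that(1,2) two_edge_colored_graphD(3)[OF G that(3)]]
      two_edge_colored_graphD(5)[OF G that(3)] by simp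
  define A where "A = {vs ! i | i. i < length vs \<and> F i}"
  have in_A: "vs ! i \<in> A \<longleftrightarrow> F i" if "i < length vs" for i
    using that vs(1) unfolding A_def by (auto simp: nth_eq_iff_index_eq)
  have "u \<in> A \<longleftrightarrow> v \<notin> A" if "E u v" for u v
  proof -
    obtain i j where "i < length vs" "u = vs ! i" "j < length vs" "v = vs ! j"
      using two_edge_colored_graphD(2)[OF G \<open>E u v\<close>] vs(2) by (metis in_set_conv_nth)
    moreover have "i \<noteq> j"
      using \<open>E u v\<close> calculation two_edge_colored_graphD(4)[OF G] by blast
    ultimately show ?thesis
      using label_differs two_edge_colored_graphD(3)[OF G \<open>E u v\<close>] \<open>E u v\<close> in_A
      by (metis linorder_neqE_nat)
  qed
  moreover have "A \<subseteq> V"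
    using vs(2) unfolding A_def by auto
  ultimately show ?thesis
    unfolding bipartite_def by blast
qed

lemma pc_cycle_obtains_neighbours:
  assumes "pc_cycle V E c xs" and "x \<in> set xs"
  obtains y z where "y \<in> set xs" "z \<in> set xs" "y \<noteq> x" "z \<noteq> x" "E y x" "E x z" "c y x \<noteq> c x z"
proof -
  let ?n = "length xs"
  have n: "?n \<ge> 2" and "distinct xs"
    and edge: "\<And>i. i < ?n \<Longrightarrow> E (xs ! i) (xs ! ((i + 1) mod ?n))"
    and alt: "\<And>i. i < ?n \<Longrightarrow> c (xs ! i) (xs ! ((i + 1) mod ?n)) \<noteq>
                                  c (xs ! ((i + 1) mod ?n)) (xs ! ((i + 2) mod ?n))"
    using assms(1) unfolding pc_cycle_def Let_def by blast+
  obtain k where k: "k < ?n" "x = xs ! k"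
    using assms(2) by (metis in_set_conv_nth)
  define i where "i = (if k = 0 then ?n - 1 else k - 1)"
  have i: "i < ?n" "(i + 1) mod ?n = k" "(i + 2) mod ?n = (k + 1) mod ?n" "i \<noteq> k"
    using n k(1) unfolding i_def by (auto simp: mod_Suc)
  have "(k + 1) mod ?n < ?n" "(k + 1) mod ?n \<noteq> k"
    using n k(1) by (auto simp: mod_Suc)
  with i show thesis
    using that[of "xs ! i" "xs ! ((k + 1) mod ?n)"] edge[of i] edge[of k] alt[of i] k
      \<open>distinct xs\<close> by (simp add: nth_eq_iff_index_eq)
qed

lemma no_pc_cycle_if_type5_ordering:
  assumes G: "two_edge_colored_graph V E c" and "type5_ordering V E c vs"
  shows "\<not> has_pc_cycle V E c"
proof
  assume "has_pc_cycle V E c"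
  then obtain xs where cyc: "pc_cycle V E c xs"
    unfolding has_pc_cycle_def by blast
  obtain F where vs: "distinct vs" "set vs = V"
    and earlier: "\<And>i j. j < i \<Longrightarrow> i < length vs \<Longrightarrow> E (vs ! i) (vs ! j) \<Longrightarrow> c (vs ! i) (vs ! j) = (\<not> F i)"
    using type5_orderingE[OF assms(2)] by blast
  have xs_V: "set xs \<subseteq> V" and "xs \<noteq> []"
    using cyc unfolding pc_cycle_def Let_def by auto
  define M where "M = {p. p < length vs \<and> vs ! p \<in> set xs}"
  have "finite M"
    unfolding M_def by simp
  have "M \<noteq> {}"
  proof -
    obtain p where "p < length vs" "vs ! p = hd xs"
      using hd_in_set[OF \<open>xs \<noteq> []\<close>] xs_V vs(2) by (metis in_set_conv_nth subsetD)
    then show ?thesis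
      using hd_in_set[OF \<open>xs \<noteq> []\<close>] unfolding M_def by auto
  qed
  define m where "m = Max M"
  have "m \<in> M"
    unfolding m_def using \<open>finite M\<close> \<open>M \<noteq> {}\<close> by (rule Max_in)
  then have m: "m < length vs" "vs ! m \<in> set xs"
    unfolding M_def by simp_all
  have before_m: "\<exists>p<m. y = vs ! p" if "y \<in> set xs" "y \<noteq> vs ! m" for y
  proof -
    have "y \<in> set vs"
      using that(1) xs_V vs(2) by blast
    then obtain p where p: "p < length vs" "y = vs ! p"
      by (auto simp: in_set_conv_nth)
    then have "p \<in> M"
      unfolding M_def using that(1) by simp
    then have "p \<le> m"
      unfolding m_def using \<open>finite M\<close> by simp
    moreover have "p \<noteq> m"
      using p that(2) by blast
    ultimately have "p < m"
      by simp
    then show ?thesis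
      using p(2) by blast
  qed
  obtain y z where y: "y \<in> set xs" "y \<noteq> vs ! m" "E y (vs ! m)"
    and z: "z \<in> set xs" "z \<noteq> vs ! m" "E (vs ! m) z"
    and alternate: "c y (vs ! m) \<noteq> c (vs ! m) z"
    using pc_cycle_obtains_neighbours[OF cyc m(2)] by blast
  obtain p q where "p < m" "y = vs ! p" "q < m" "z = vs ! q"
    using before_m[OF y(1,2)] before_m[OF z(1,2)] by blast
  then have "c y (vs ! m) = (\<not> F m)" "c (vs ! m) z = (\<not> F m)"
    using earlier[of p m] earlier[of q m] m(1) y(3) z(3) two_edge_colored_graphD(3,5)[OF G y(3)]
    by simp_all
  then show False
    using alternate by simp
qed

theorem corollary2:
  fixes V :: "'a set" and E c :: "'a \<Rightarrow> 'a \<Rightarrow> bool"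
  assumes "two_edge_colored_graph V E c"
  shows "pc_acyclic_type5 V E c \<longleftrightarrow> bipartite V E \<and> \<not> has_pc_cycle V E c"
  using pc_acyclic_type5_if_bipartite_without_pc_cycle[OF assms]
    bipartite_if_type5_ordering[OF assms] no_pc_cycle_if_type5_ordering[OF assms]
  unfolding pc_acyclic_type5_def by blast

end
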